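(* Let $R=\mathrm{Mat}_n(\mathcal O_D,\underline m)\subset\mathrm{Mat}_n(D)$ be a standard monomial order of level $\underline m=(m_{ij})$ with $m_{1i}=0$ for all $i=1,\dots,n$. Let $l_1,\dots,l_n\in\mathbb Z$ and let $M=[\mathfrak P^{l_1},\dots,\mathfrak P^{l_n}]^t=\{[x_1,\dots,x_n]^t: x_i\in\mathfrak P^{l_i}\}\subset D^n$ be a left $R$-submodule of $D^n$ (where $R$ acts on column vectors by matrix multiplication). Then $M$ is a projective left $R$-module if and only if $M$ is, up to a scalar in $D$, a column of $R$; that is, if and only if there exist $1\le j\le n$ and $c\in\mathbb Z$ such that $l_i=m_{ij}+c$ for all $1\le i\le n$.
   Context: Let $k$ be a non-Archimedean local field with ring of integers $\mathcal O$, let $D$ be a finite-dimensional central division algebra over $k$, $\mathcal O_D$ its valuation ring, $\mathfrak P$ its maximal ideal. For $\underline m=(m_{ij})\in\mathrm{Mat}_n(\mathbb Z)$ with $m_{ii}=0$ and $m_{ik}\le m_{ij}+m_{jk}$ for all $i,j,k$, the standard monomial order of level $\underline m$ is $\mathrm{Mat}_n(\mathcal O_D,\underline m)=\{(a_{ij})\in\mathrm{Mat}_n(D): a_{ij}\in\mathfrak P^{m_{ij}}\ \forall i,j\}$. $D^n$ denotes column vectors, a right $D$-vector space and left $\mathrm{Mat}_n(D)$-module. *)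

theory Defs
  imports Main
begin

text \<open>Powers of the maximal ideal of O_D, via the normalized valuation v on D
  (v is only meaningful on nonzero elements; 0 lies in every power).\<close>
definition Ppow :: "('d::division_ring \<Rightarrow> int) \<Rightarrow> int \<Rightarrow> 'd set" where
  "Ppow v l = {x. x = 0 \<or> l \<le> v x}"

abbreviation dcenter :: "'d::ring set" where
  "dcenter \<equiv> {c. \<forall>x. c * x = x * c}"

text \<open>D is a finite-dimensional (central) division algebra over its centre k, where k is a
  non-Archimedean local field (complete, non-trivially discretely valued, finite residue
  field), and v is the normalized discrete valuation of D (v surjective onto the integers).\<close>
definition nonarch_local_central_divalg :: "('d::division_ring \<Rightarrow> int) \<Rightarrow> bool" where
  "nonarch_local_central_divalg v \<longleftrightarrow>
     (\<forall>x y. x \<noteq> 0 \<longrightarrow> y \<noteq> 0 \<longrightarrow> v (x * y) = v x + v y)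
   \<and> (\<forall>x y. x \<noteq> 0 \<longrightarrow> y \<noteq> 0 \<longrightarrow> x + y \<noteq> 0 \<longrightarrow> min (v x) (v y) \<le> v (x + y))
   \<and> (\<forall>l. \<exists>x. x \<noteq> 0 \<and> v x = l)
   \<and> (\<exists>c\<in>dcenter. c \<noteq> 0 \<and> v c \<noteq> 0)
   \<and> (\<forall>X::nat \<Rightarrow> 'd. (\<forall>k. X k \<in> dcenter) \<and>
         (\<forall>N. \<exists>K. \<forall>a\<ge>K. \<forall>b\<ge>K. X a - X b \<in> Ppow v N) \<longrightarrow>
         (\<exists>L\<in>dcenter. \<forall>N. \<exists>K. \<forall>a\<ge>K. X a - L \<in> Ppow v N))
   \<and> (\<exists>S. finite S \<and> S \<subseteq> dcenter \<inter> Ppow v 0 \<and>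
         (\<forall>x\<in>dcenter \<inter> Ppow v 0. \<exists>s\<in>S. x - s \<in> Ppow v 1))
   \<and> (\<exists>B. finite B \<and> (\<forall>x::'d. \<exists>c. (\<forall>b\<in>B. c b \<in> dcenter) \<and> x = (\<Sum>b\<in>B. c b * b)))"

text \<open>n x n matrices are functions nat => nat => 'd, zero outside {0..<n}^2; column vectors
  in D^n are functions nat => 'd, zero outside {0..<n}. Index 0 plays the role of index 1.\<close>

definition smo :: "('d::division_ring \<Rightarrow> int) \<Rightarrow> nat \<Rightarrow> (nat \<Rightarrow> nat \<Rightarrow> int)
    \<Rightarrow> (nat \<Rightarrow> nat \<Rightarrow> 'd) set" where
  "smo v n m = {A. (\<forall>i<n. \<forall>j<n. A i j \<in> Ppow v (m i j)) \<and>
                   (\<forall>i j. \<not> (i < n \<and> j < n) \<longrightarrow> A i j = 0)}"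

definition col_lattice :: "('d::division_ring \<Rightarrow> int) \<Rightarrow> nat \<Rightarrow> (nat \<Rightarrow> int) \<Rightarrow> (nat \<Rightarrow> 'd) set" where
  "col_lattice v n l = {x. (\<forall>i<n. x i \<in> Ppow v (l i)) \<and> (\<forall>i\<ge>n. x i = 0)}"

definition mat_vec :: "nat \<Rightarrow> (nat \<Rightarrow> nat \<Rightarrow> 'd::ring) \<Rightarrow> (nat \<Rightarrow> 'd) \<Rightarrow> (nat \<Rightarrow> 'd)" where
  "mat_vec n A x = (\<lambda>i. if i < n then (\<Sum>j<n. A i j * x j) else 0)"

definition mat_mul :: "nat \<Rightarrow> (nat \<Rightarrow> nat \<Rightarrow> 'd::ring) \<Rightarrow> (nat \<Rightarrow> nat \<Rightarrow> 'd) \<Rightarrow> (nat \<Rightarrow> nat \<Rightarrow> 'd)" where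
  "mat_mul n A B = (\<lambda>i k. if i < n \<and> k < n then (\<Sum>j<n. A i j * B j k) else 0)"

definition vadd :: "(nat \<Rightarrow> 'd::ring) \<Rightarrow> (nat \<Rightarrow> 'd) \<Rightarrow> (nat \<Rightarrow> 'd)" where
  "vadd x y = (\<lambda>i. x i + y i)"

text \<open>Free left R-module R^(I) with basis indexed by I: finitely supported families.\<close>
definition free_mod :: "(nat \<Rightarrow> nat \<Rightarrow> 'd::ring) set \<Rightarrow> 'i set \<Rightarrow> ('i \<Rightarrow> nat \<Rightarrow> nat \<Rightarrow> 'd) set" where
  "free_mod R I = {f. (\<forall>i. f i \<in> R) \<and> (\<forall>i. i \<notin> I \<longrightarrow> f i = (\<lambda>a b. 0)) \<and>
                      finite {i. f i \<noteq> (\<lambda>a b. 0)}}"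

definition fadd :: "('i \<Rightarrow> nat \<Rightarrow> nat \<Rightarrow> 'd::ring) \<Rightarrow> ('i \<Rightarrow> nat \<Rightarrow> nat \<Rightarrow> 'd) \<Rightarrow> ('i \<Rightarrow> nat \<Rightarrow> nat \<Rightarrow> 'd)" where
  "fadd f g = (\<lambda>i a b. f i a b + g i a b)"

definition fsmul :: "nat \<Rightarrow> (nat \<Rightarrow> nat \<Rightarrow> 'd::ring) \<Rightarrow> ('i \<Rightarrow> nat \<Rightarrow> nat \<Rightarrow> 'd) \<Rightarrow> ('i \<Rightarrow> nat \<Rightarrow> nat \<Rightarrow> 'd)" where
  "fsmul n A f = (\<lambda>i. mat_mul n A (f i))"

text \<open>The basis index set I ranges over sets of elements of the type of M (enough, since the
  free module on M itself always surjects onto M).\<close>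
definition is_projective :: "nat \<Rightarrow> (nat \<Rightarrow> nat \<Rightarrow> 'd::ring) set \<Rightarrow> (nat \<Rightarrow> 'd) set \<Rightarrow> bool" where
  "is_projective n R M \<longleftrightarrow>
    (\<exists>(I::(nat \<Rightarrow> 'd) set) p s.
       (\<forall>f\<in>free_mod R I. p f \<in> M)
     \<and> (\<forall>f\<in>free_mod R I. \<forall>g\<in>free_mod R I. p (fadd f g) = vadd (p f) (p g))
     \<and> (\<forall>A\<in>R. \<forall>f\<in>free_mod R I. p (fsmul n A f) = mat_vec n A (p f))
     \<and> (\<forall>x\<in>M. s x \<in> free_mod R I)
     \<and> (\<forall>x\<in>M. \<forall>y\<in>M. s (vadd x y) = fadd (s x) (s y))
     \<and> (\<forall>A\<in>R. \<forall>x\<in>M. s (mat_vec n A x) = fsmul n A (s x))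
     \<and> (\<forall>x\<in>M. p (s x) = x))"

end

theory Submission
  imports Defs
begin

text \<open>
  If \<open>l\<close> is column \<open>j\<close> of \<open>m\<close> shifted by \<open>c = v d\<close>, then \<open>M = R (d e\<^sub>j)\<close>, and
  \<open>x \<mapsto> x e\<^sub>j\<^sup>t d\<^sup>-\<^sup>1\<close> splits \<open>R \<rightarrow> M\<close>, so M is a direct summand of R.

  Conversely, let \<open>p\<close>, \<open>s\<close> split M off a free module and take \<open>v d = l\<^sub>k\<close>.
  Expanding \<open>d = (p (s (d e\<^sub>k)))\<^sub>k\<close> along the basis, the ultrametric inequality yields a basis
  vector \<open>b\<close> and an index \<open>q\<close> with \<open>v (\<alpha> y\<^sub>q) \<le> l\<^sub>k\<close>, where \<open>\<alpha>\<close> is the \<open>(k, q)\<close> entry of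
  the \<open>b\<close>-th coordinate of \<open>s (d e\<^sub>k)\<close> and \<open>y = p b \<in> M\<close>; hence \<open>v \<alpha> \<le> l\<^sub>k - l\<^sub>q\<close>.
  R-stability of M gives \<open>l\<^sub>i \<le> m\<^sub>i\<^sub>q + l\<^sub>q\<close>. For the reverse inequality write
  \<open>a E\<^sub>i\<^sub>k (d e\<^sub>k) = g (t e\<^sub>i)\<close> with \<open>v t = l\<^sub>i\<close>; applying the R-linear \<open>s\<close> and comparing
  \<open>(i, q)\<close> entries shows that \<open>t d\<^sup>-\<^sup>1 \<alpha>\<close> is an entry of an element of R, so
  \<open>m\<^sub>i\<^sub>q \<le> l\<^sub>i - l\<^sub>k + v \<alpha> \<le> l\<^sub>i - l\<^sub>q\<close>. Thus \<open>l\<close> is column \<open>q\<close> of \<open>m\<close> shifted by \<open>l\<^sub>q\<close>.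
\<close>

lemma zero_in_Ppow: "0 \<in> Ppow v k"
  by (simp add: Ppow_def)

locale discrete_valuation =
  fixes v :: "'d::division_ring \<Rightarrow> int"
  assumes v_mult: "\<And>x y. x \<noteq> 0 \<Longrightarrow> y \<noteq> 0 \<Longrightarrow> v (x * y) = v x + v y"
    and v_add: "\<And>x y. x \<noteq> 0 \<Longrightarrow> y \<noteq> 0 \<Longrightarrow> x + y \<noteq> 0 \<Longrightarrow> min (v x) (v y) \<le> v (x + y)"
    and v_surj: "\<And>k. \<exists>x. x \<noteq> 0 \<and> v x = k"

lemma nonarch_local_central_divalg_imp_discrete_valuation:
  assumes "nonarch_local_central_divalg v"
  shows "discrete_valuation v"
  using assms unfolding nonarch_local_central_divalg_def by unfold_locales blast+

context discrete_valuation
begin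

lemma v_one: "v 1 = 0"
  using v_mult[of 1 1] by simp

lemma v_inverse: "x \<noteq> 0 \<Longrightarrow> v (inverse x) = - v x"
  using v_mult[of x "inverse x"] by (simp add: v_one)

lemma Ppow_mult: "x \<in> Ppow v a \<Longrightarrow> y \<in> Ppow v b \<Longrightarrow> x * y \<in> Ppow v (a + b)"
  unfolding Ppow_def using v_mult by fastforce

lemma Ppow_add: "x \<in> Ppow v a \<Longrightarrow> y \<in> Ppow v a \<Longrightarrow> x + y \<in> Ppow v a"
  unfolding Ppow_def using v_add[of x y] by fastforce

lemma Ppow_sum: "finite B \<Longrightarrow> (\<And>b. b \<in> B \<Longrightarrow> f b \<in> Ppow v a) \<Longrightarrow> sum f B \<in> Ppow v a"
  by (induction B rule: finite_induct) (simp_all add: Ppow_add zero_in_Ppow)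

lemma sum_notin_Ppow_obtains_term:
  assumes "finite B" and "sum f B \<notin> Ppow v a"
  obtains b where "b \<in> B" and "f b \<notin> Ppow v a"
  using Ppow_sum assms by blast

end

definition mat_scalar :: "nat \<Rightarrow> 'd::ring \<Rightarrow> nat \<Rightarrow> nat \<Rightarrow> 'd" where
  "mat_scalar n g = (\<lambda>r q. if r = q \<and> r < n then g else 0)"

definition mat_single :: "nat \<Rightarrow> nat \<Rightarrow> 'd::ring \<Rightarrow> nat \<Rightarrow> nat \<Rightarrow> 'd" where
  "mat_single i k a = (\<lambda>r q. if r = i \<and> q = k then a else 0)"

definition vec_single :: "nat \<Rightarrow> 'd::ring \<Rightarrow> nat \<Rightarrow> 'd" where
  "vec_single i t = (\<lambda>r. if r = i then t else 0)"

lemma mat_vec_mat_single: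
  assumes "i < n" "k < n"
  shows "mat_vec n (mat_single i k a) x = vec_single i (a * x k)"
proof (rule ext)
  fix r
  have "(\<Sum>q<n. mat_single i k a r q * x q) = (\<Sum>q<n. if q = k then (if r = i then a * x q else 0) else 0)"
    by (rule sum.cong) (auto simp: mat_single_def)
  then show "mat_vec n (mat_single i k a) x r = vec_single i (a * x k) r"
    using assms by (auto simp: mat_vec_def vec_single_def)
qed

lemma mat_vec_vec_single:
  assumes "j < n"
  shows "mat_vec n A (vec_single j d) = (\<lambda>i. if i < n then A i j * d else 0)"
proof (rule ext)
  fix i
  have "(\<Sum>q<n. A i q * vec_single j d q) = (\<Sum>q<n. if q = j then A i q * d else 0)"
    by (rule sum.cong) (auto simp: vec_single_def)
  then show "mat_vec n A (vec_single j d) i = (if i < n then A i j * d else 0)"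
    using assms by (simp add: mat_vec_def)
qed

lemma mat_vec_mat_scalar_vec_single:
  assumes "i < n"
  shows "mat_vec n (mat_scalar n g) (vec_single i t) = vec_single i (g * t)"
proof (rule ext)
  fix r
  have "(\<Sum>q<n. mat_scalar n g r q * vec_single i t q)
      = (\<Sum>q<n. if q = r then (if r = i then g * t else 0) else 0)"
    by (rule sum.cong) (auto simp: mat_scalar_def vec_single_def)
  then show "mat_vec n (mat_scalar n g) (vec_single i t) r = vec_single i (g * t) r"
    using assms by (auto simp: mat_vec_def vec_single_def)
qed

lemma mat_mul_mat_single_row:
  assumes "i < n" "k < n"
  shows "mat_mul n (mat_single i k a) B i c = (if c < n then a * B k c else 0)"
proof -
  have "(\<Sum>q<n. mat_single i k a i q * B q c) = (\<Sum>q<n. if q = k then a * B q c else 0)"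
    by (rule sum.cong) (auto simp: mat_single_def)
  then show ?thesis using assms by (simp add: mat_mul_def)
qed

lemma mat_mul_mat_scalar:
  "mat_mul n (mat_scalar n g) B r c = (if r < n \<and> c < n then g * B r c else 0)"
proof -
  have "(\<Sum>q<n. mat_scalar n g r q * B q c) = (\<Sum>q<n. if q = r then (if r < n then g * B q c else 0) else 0)"
    by (rule sum.cong) (auto simp: mat_scalar_def)
  then show ?thesis by (simp add: mat_mul_def)
qed

lemma mat_mul_mat_scalar_one_right:
  fixes A :: "nat \<Rightarrow> nat \<Rightarrow> 'd::ring_1"
  assumes "\<And>r c. \<not> (r < n \<and> c < n) \<Longrightarrow> A r c = 0"
  shows "mat_mul n A (mat_scalar n 1) = A"
proof (rule ext)+
  fix r c
  have "(\<Sum>q<n. A r q * mat_scalar n 1 q c) = (\<Sum>q<n. if q = c then (if c < n then A r q else 0) else 0)"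
    by (rule sum.cong) (auto simp: mat_scalar_def)
  then show "mat_mul n A (mat_scalar n 1) r c = A r c"
    using assms by (auto simp: mat_mul_def)
qed

lemma mat_mul_zero_right: "mat_mul n A (\<lambda>_ _. 0) = (\<lambda>_ _. 0)"
  by (simp add: mat_mul_def fun_eq_iff)

lemma mat_vec_mat_mul: "mat_vec n (mat_mul n A B) x = mat_vec n A (mat_vec n B x)"
proof (rule ext)
  fix r
  have "(\<Sum>q<n. (\<Sum>p<n. A r p * B p q) * x q) = (\<Sum>q<n. \<Sum>p<n. A r p * (B p q * x q))"
    by (simp add: sum_distrib_right mult.assoc)
  also have "\<dots> = (\<Sum>p<n. \<Sum>q<n. A r p * (B p q * x q))"
    by (rule sum.swap)
  also have "\<dots> = (\<Sum>p<n. A r p * (\<Sum>q<n. B p q * x q))"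
    by (simp add: sum_distrib_left)
  finally have "(\<Sum>q<n. (\<Sum>p<n. A r p * B p q) * x q) = (\<Sum>p<n. A r p * (\<Sum>q<n. B p q * x q))" .
  then show "mat_vec n (mat_mul n A B) x r = mat_vec n A (mat_vec n B x) r"
    by (simp add: mat_vec_def mat_mul_def)
qed

lemma mat_vec_add_left:
  "mat_vec n (\<lambda>r q. A r q + B r q) x = vadd (mat_vec n A x) (mat_vec n B x)"
  by (simp add: mat_vec_def vadd_def fun_eq_iff distrib_right sum.distrib)

lemma zero_in_smo: "(\<lambda>_ _. 0) \<in> smo v n m"
  by (simp add: smo_def Ppow_def)

lemma vanishes_outside_smo: "A \<in> smo v n m \<Longrightarrow> \<not> (r < n \<and> c < n) \<Longrightarrow> A r c = 0"
  by (simp add: smo_def)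

lemma mat_single_in_smo: "i < n \<Longrightarrow> k < n \<Longrightarrow> a \<in> Ppow v (m i k) \<Longrightarrow> mat_single i k a \<in> smo v n m"
  by (auto simp: mat_single_def smo_def Ppow_def)

lemma mat_scalar_in_smo:
  "\<forall>i<n. m i i \<le> 0 \<Longrightarrow> g \<in> Ppow v 0 \<Longrightarrow> mat_scalar n g \<in> smo v n m"
  by (auto simp: mat_scalar_def smo_def Ppow_def)

lemma vec_single_in_col_lattice: "i < n \<Longrightarrow> t \<in> Ppow v (l i) \<Longrightarrow> vec_single i t \<in> col_lattice v n l"
  by (auto simp: vec_single_def col_lattice_def Ppow_def)

definition free_single :: "'i \<Rightarrow> (nat \<Rightarrow> nat \<Rightarrow> 'd::ring) \<Rightarrow> 'i \<Rightarrow> nat \<Rightarrow> nat \<Rightarrow> 'd" where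
  "free_single b A = (\<lambda>b'. if b' = b then A else (\<lambda>_ _. 0))"

lemma free_single_in_free_mod:
  assumes "(\<lambda>_ _. 0) \<in> R" "b \<in> I" "A \<in> R"
  shows "free_single b A \<in> free_mod R I"
proof -
  have "{b'. free_single b A b' \<noteq> (\<lambda>_ _. 0)} \<subseteq> {b}"
    by (auto simp: free_single_def)
  then have "finite {b'. free_single b A b' \<noteq> (\<lambda>_ _. 0)}"
    using finite_subset by blast
  then show ?thesis
    using assms unfolding free_mod_def free_single_def by auto
qed

lemma free_mod_update_zero:
  assumes "(\<lambda>_ _. 0) \<in> R" "f \<in> free_mod R I"
  shows "f(b := (\<lambda>_ _. 0)) \<in> free_mod R I"
proof -
  have "{b'. (f(b := (\<lambda>_ _. 0))) b' \<noteq> (\<lambda>_ _. 0)} \<subseteq> {b'. f b' \<noteq> (\<lambda>_ _. 0)}"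
    by auto
  then have "finite {b'. (f(b := (\<lambda>_ _. 0))) b' \<noteq> (\<lambda>_ _. 0)}"
    using assms(2) finite_subset unfolding free_mod_def by blast
  then show ?thesis
    using assms unfolding free_mod_def by auto
qed

lemma fsmul_free_single: "fsmul n A (free_single b B) = free_single b (mat_mul n A B)"
  by (simp add: fsmul_def free_single_def fun_eq_iff mat_mul_zero_right)

locale free_module_hom =
  fixes n :: nat and R :: "(nat \<Rightarrow> nat \<Rightarrow> 'd::ring_1) set" and I :: "'i set"
    and p :: "('i \<Rightarrow> nat \<Rightarrow> nat \<Rightarrow> 'd) \<Rightarrow> nat \<Rightarrow> 'd"
  assumes zero_in_R: "(\<lambda>_ _. 0) \<in> R"
    and one_in_R: "mat_scalar n 1 \<in> R"
    and vanishes_outside_R: "\<And>A r c. A \<in> R \<Longrightarrow> \<not> (r < n \<and> c < n) \<Longrightarrow> A r c = 0"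
    and additive: "\<And>f g. f \<in> free_mod R I \<Longrightarrow> g \<in> free_mod R I \<Longrightarrow> p (fadd f g) = vadd (p f) (p g)"
    and homogeneous: "\<And>A f. A \<in> R \<Longrightarrow> f \<in> free_mod R I \<Longrightarrow> p (fsmul n A f) = mat_vec n A (p f)"
begin

definition basis_image :: "'i \<Rightarrow> nat \<Rightarrow> 'd" where
  "basis_image b = p (free_single b (mat_scalar n 1))"

lemma map_zero: "p (\<lambda>_ _ _. 0) = (\<lambda>_. 0)"
proof -
  have zero_free: "(\<lambda>_ _ _. 0) \<in> free_mod R I"
    using zero_in_R by (simp add: free_mod_def)
  have "p (\<lambda>_ _ _. 0) = vadd (p (\<lambda>_ _ _. 0)) (p (\<lambda>_ _ _. 0))"
    using additive[OF zero_free zero_free] by (simp add: fadd_def)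
  then show ?thesis
    by (simp add: vadd_def fun_eq_iff)
qed

lemma map_free_single:
  assumes "b \<in> I" "A \<in> R"
  shows "p (free_single b A) = mat_vec n A (basis_image b)"
proof -
  have "fsmul n A (free_single b (mat_scalar n 1)) = free_single b A"
    using assms(2) by (simp add: fsmul_free_single mat_mul_mat_scalar_one_right vanishes_outside_R)
  then show ?thesis
    using homogeneous[OF assms(2) free_single_in_free_mod[OF zero_in_R assms(1) one_in_R]]
    by (simp add: basis_image_def)
qed

lemma map_expansion:
  assumes "finite B" "f \<in> free_mod R I" "{b. f b \<noteq> (\<lambda>_ _. 0)} \<subseteq> B"
  shows "p f i = (\<Sum>b\<in>B. mat_vec n (f b) (basis_image b) i)"
  using assms
proof (induction B arbitrary: f rule: finite_induct)
  case empty
  then have "f = (\<lambda>_ _ _. 0)" by auto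
  then show ?case using map_zero by simp
next
  case (insert b B f)
  define f' where "f' = f(b := (\<lambda>_ _. 0))"
  have f'_free: "f' \<in> free_mod R I"
    unfolding f'_def by (rule free_mod_update_zero[OF zero_in_R insert.prems(1)])
  have "{b. f' b \<noteq> (\<lambda>_ _. 0)} \<subseteq> B"
    using insert.prems(2) by (auto simp: f'_def)
  then have "p f' i = (\<Sum>b\<in>B. mat_vec n (f' b) (basis_image b) i)"
    by (rule insert.IH[OF f'_free])
  also have "\<dots> = (\<Sum>b\<in>B. mat_vec n (f b) (basis_image b) i)"
    using insert.hyps(2) by (auto simp: f'_def intro: sum.cong)
  finally have IH: "p f' i = (\<Sum>b\<in>B. mat_vec n (f b) (basis_image b) i)" .
  show ?case
  proof (cases "f b = (\<lambda>_ _. 0)")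
    case True
    then show ?thesis
      using IH insert.hyps by (simp add: f'_def mat_vec_def fun_upd_idem)
  next
    case False
    then have "b \<in> I" and "f b \<in> R"
      using insert.prems(1) by (auto simp: free_mod_def)
    moreover have "f = fadd (free_single b (f b)) f'"
      by (simp add: fun_eq_iff fadd_def free_single_def f'_def)
    ultimately have "p f = vadd (p (free_single b (f b))) (p f')"
      using additive[OF free_single_in_free_mod[OF zero_in_R] f'_free] by metis
    then show ?thesis
      using IH insert.hyps map_free_single[OF \<open>b \<in> I\<close> \<open>f b \<in> R\<close>] by (simp add: vadd_def)
  qed
qed

end

lemma projective_if_retract_of_ring:
  fixes \<sigma> :: "(nat \<Rightarrow> 'd::ring_1) \<Rightarrow> nat \<Rightarrow> nat \<Rightarrow> 'd"
  assumes zero_in_R: "(\<lambda>_ _. 0) \<in> R"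
    and orbit: "\<And>A. A \<in> R \<Longrightarrow> mat_vec n A u \<in> M"
    and \<sigma>_in_R: "\<And>x. x \<in> M \<Longrightarrow> \<sigma> x \<in> R"
    and \<sigma>_add: "\<And>x y. x \<in> M \<Longrightarrow> y \<in> M \<Longrightarrow> \<sigma> (vadd x y) = (\<lambda>r c. \<sigma> x r c + \<sigma> y r c)"
    and \<sigma>_hom: "\<And>A x. A \<in> R \<Longrightarrow> x \<in> M \<Longrightarrow> \<sigma> (mat_vec n A x) = mat_mul n A (\<sigma> x)"
    and \<sigma>_inverse: "\<And>x. x \<in> M \<Longrightarrow> mat_vec n (\<sigma> x) u = x"
  shows "is_projective n R M"
proof -
  \<comment> \<open>A free module of rank one; its basis has to be indexed by a vector, any will do.\<close>
  define z :: "nat \<Rightarrow> 'd" where "z = (\<lambda>_. 0)"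
  define p where "p f = mat_vec n (f z) u" for f :: "(nat \<Rightarrow> 'd) \<Rightarrow> nat \<Rightarrow> nat \<Rightarrow> 'd"
  define s where "s x = free_single z (\<sigma> x)" for x
  have "p f \<in> M" if "f \<in> free_mod R {z}" for f
    using that orbit by (simp add: p_def free_mod_def)
  moreover have "p (fadd f g) = vadd (p f) (p g)" for f g
    by (simp add: p_def fadd_def mat_vec_add_left)
  moreover have "p (fsmul n A f) = mat_vec n A (p f)" for A f
    by (simp add: p_def fsmul_def mat_vec_mat_mul)
  moreover have "s x \<in> free_mod R {z}" if "x \<in> M" for x
    by (simp add: s_def free_single_in_free_mod zero_in_R \<sigma>_in_R that)
  moreover have "s (vadd x y) = fadd (s x) (s y)" if "x \<in> M" "y \<in> M" for x y
    using that by (simp add: s_def \<sigma>_add fadd_def free_single_def fun_eq_iff)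
  moreover have "s (mat_vec n A x) = fsmul n A (s x)" if "A \<in> R" "x \<in> M" for A x
    using that by (simp add: s_def \<sigma>_hom fsmul_free_single)
  moreover have "p (s x) = x" if "x \<in> M" for x
    using that by (simp add: p_def s_def free_single_def \<sigma>_inverse)
  ultimately show ?thesis
    unfolding is_projective_def by (intro exI[of _ "{z}"] exI[of _ p] exI[of _ s]) blast
qed

context discrete_valuation
begin

lemma col_lattice_projective_if_shifted_column:
  assumes j: "j < n" and l: "\<forall>i<n. l i = m i j + c"
  shows "is_projective n (smo v n m) (col_lattice v n l)"
proof -
  obtain d where d: "d \<noteq> 0" "v d = c"
    using v_surj by blast
  define \<sigma> :: "(nat \<Rightarrow> 'd) \<Rightarrow> nat \<Rightarrow> nat \<Rightarrow> 'd" where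
    "\<sigma> x = (\<lambda>r q. if r < n \<and> q = j then x r * inverse d else 0)" for x
  show ?thesis
  proof (rule projective_if_retract_of_ring[where u = "vec_single j d" and \<sigma> = \<sigma>])
    fix A assume "A \<in> smo v n m"
    then have "A i j * d \<in> Ppow v (l i)" if "i < n" for i
      using that j l d Ppow_mult[of "A i j" "m i j" d c] by (simp add: smo_def Ppow_def)
    then show "mat_vec n A (vec_single j d) \<in> col_lattice v n l"
      using j by (simp add: mat_vec_vec_single col_lattice_def)
  next
    fix x assume x: "x \<in> col_lattice v n l"
    have "x r * inverse d \<in> Ppow v (m r j)" if "r < n" for r
      using that x l d v_inverse Ppow_mult[of "x r" "l r" "inverse d" "- c"]
      by (simp add: col_lattice_def Ppow_def)
    then show "\<sigma> x \<in> smo v n m"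
      using j by (simp add: \<sigma>_def smo_def zero_in_Ppow)
    show "mat_vec n (\<sigma> x) (vec_single j d) = x"
      using x j d by (simp add: mat_vec_vec_single \<sigma>_def col_lattice_def fun_eq_iff mult.assoc)
  next
    fix x y
    show "\<sigma> (vadd x y) = (\<lambda>r c. \<sigma> x r c + \<sigma> y r c)"
      by (simp add: \<sigma>_def vadd_def fun_eq_iff distrib_right)
  next
    fix A x
    show "\<sigma> (mat_vec n A x) = mat_mul n A (\<sigma> x)"
      using j by (auto simp: \<sigma>_def mat_vec_def mat_mul_def fun_eq_iff sum_distrib_right mult.assoc
          if_distrib)
  qed (rule zero_in_smo)
qed

lemma stable_col_lattice_exponent_le:
  assumes stable: "\<forall>A\<in>smo v n m. \<forall>x\<in>col_lattice v n l. mat_vec n A x \<in> col_lattice v n l"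
    and i: "i < n" and k: "k < n"
  shows "l i \<le> m i k + l k"
proof -
  obtain a where a: "a \<noteq> 0" "v a = m i k"
    using v_surj by blast
  obtain t where t: "t \<noteq> 0" "v t = l k"
    using v_surj by blast
  have "a \<in> Ppow v (m i k)" and "t \<in> Ppow v (l k)"
    using a t by (simp_all add: Ppow_def)
  then have "mat_vec n (mat_single i k a) (vec_single k t) \<in> col_lattice v n l"
    using stable mat_single_in_smo[OF i k] vec_single_in_col_lattice[OF k] by blast
  then have "mat_vec n (mat_single i k a) (vec_single k t) i \<in> Ppow v (l i)"
    using i unfolding col_lattice_def by blast
  then have "a * t \<in> Ppow v (l i)"
    by (simp add: mat_vec_mat_single[OF i k] vec_single_def)
  then show ?thesis
    using a t v_mult[of a t] by (simp add: Ppow_def)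
qed

lemma projective_section_entry_bound:
  fixes s :: "(nat \<Rightarrow> 'd) \<Rightarrow> 'i \<Rightarrow> nat \<Rightarrow> nat \<Rightarrow> 'd"
  assumes diag: "\<forall>i<n. m i i \<le> 0"
    and s_free: "\<forall>x\<in>col_lattice v n l. s x \<in> free_mod (smo v n m) I"
    and s_hom: "\<forall>A\<in>smo v n m. \<forall>x\<in>col_lattice v n l. s (mat_vec n A x) = fsmul n A (s x)"
    and i: "i < n" and k: "k < n" and q: "q < n"
    and d: "d \<noteq> 0" "v d = l k"
    and \<alpha>_nonzero: "s (vec_single k d) b k q \<noteq> 0"
  shows "m i q + l k \<le> l i + v (s (vec_single k d) b k q)"
proof -
  define \<alpha> where "\<alpha> = s (vec_single k d) b k q"
  \<comment> \<open>\<open>v g \<ge> 0\<close> puts \<open>g\<close> times the identity into R; the other bound puts \<open>a\<close> at position (i, k).\<close>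
  obtain g where g: "g \<noteq> 0" "v g = max 0 (m i k - l i + l k)"
    using v_surj by blast
  obtain t where t: "t \<noteq> 0" "v t = l i"
    using v_surj by blast
  define a where "a = g * t * inverse d"
  have "v a = v g + l i - l k"
    using g t d by (simp add: a_def v_mult v_inverse)
  then have "a \<in> Ppow v (m i k)"
    using g by (simp add: Ppow_def max_def)
  then have a_R: "mat_single i k a \<in> smo v n m"
    by (rule mat_single_in_smo[OF i k])
  have g_R: "mat_scalar n g \<in> smo v n m"
    using diag g by (intro mat_scalar_in_smo) (simp_all add: Ppow_def)
  have "d \<in> Ppow v (l k)" and "t \<in> Ppow v (l i)"
    using d t by (simp_all add: Ppow_def)
  then have d_M: "vec_single k d \<in> col_lattice v n l" and t_M: "vec_single i t \<in> col_lattice v n l"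
    using vec_single_in_col_lattice[OF k] vec_single_in_col_lattice[OF i] by blast+
  have "a * d = g * t"
    using d by (simp add: a_def mult.assoc)
  then have "mat_vec n (mat_single i k a) (vec_single k d) = mat_vec n (mat_scalar n g) (vec_single i t)"
    by (simp add: mat_vec_mat_single[OF i k] mat_vec_mat_scalar_vec_single[OF i])
      (simp add: vec_single_def)
  then have "fsmul n (mat_single i k a) (s (vec_single k d)) = fsmul n (mat_scalar n g) (s (vec_single i t))"
    using s_hom a_R g_R d_M t_M by metis
  then have "a * \<alpha> = g * s (vec_single i t) b i q"
    using i q unfolding fsmul_def \<alpha>_def
    by (metis mat_mul_mat_single_row[OF i k] mat_mul_mat_scalar)
  then have "g * (t * inverse d * \<alpha>) = g * s (vec_single i t) b i q"
    by (simp add: a_def mult.assoc)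
  then have \<beta>: "s (vec_single i t) b i q = t * inverse d * \<alpha>"
    using g by simp
  have "s (vec_single i t) b i q \<in> Ppow v (m i q)"
    using s_free t_M i q by (simp add: free_mod_def smo_def)
  then show ?thesis
    using \<beta> t d \<alpha>_nonzero by (simp add: Ppow_def v_mult v_inverse \<alpha>_def)
qed

lemma shifted_column_if_col_lattice_projective:
  assumes diag: "\<forall>i<n. m i i \<le> 0"
    and stable: "\<forall>A\<in>smo v n m. \<forall>x\<in>col_lattice v n l. mat_vec n A x \<in> col_lattice v n l"
    and k: "k < n"
    and proj: "is_projective n (smo v n m) (col_lattice v n l)"
  shows "\<exists>j<n. \<exists>c. \<forall>i<n. l i = m i j + c"
proof -
  let ?R = "smo v n m" and ?M = "col_lattice v n l"
  obtain I :: "(nat \<Rightarrow> 'd) set" and p s where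
    p_M: "\<forall>f\<in>free_mod ?R I. p f \<in> ?M"
    and p_add: "\<forall>f\<in>free_mod ?R I. \<forall>g\<in>free_mod ?R I. p (fadd f g) = vadd (p f) (p g)"
    and p_hom: "\<forall>A\<in>?R. \<forall>f\<in>free_mod ?R I. p (fsmul n A f) = mat_vec n A (p f)"
    and s_free: "\<forall>x\<in>?M. s x \<in> free_mod ?R I"
    and s_hom: "\<forall>A\<in>?R. \<forall>x\<in>?M. s (mat_vec n A x) = fsmul n A (s x)"
    and p_s: "\<forall>x\<in>?M. p (s x) = x"
    using proj unfolding is_projective_def by blast
  have one_R: "mat_scalar n 1 \<in> ?R"
    using diag by (intro mat_scalar_in_smo) (simp_all add: Ppow_def v_one)
  interpret free_module_hom n ?R I p
  proof
    show "(\<lambda>_ _. 0) \<in> ?R" by (rule zero_in_smo)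
  qed (use p_add p_hom one_R vanishes_outside_smo in simp_all)
  obtain d where d: "d \<noteq> 0" "v d = l k"
    using v_surj by blast
  then have d_M: "vec_single k d \<in> ?M"
    using vec_single_in_col_lattice[OF k, of d v l] by (simp add: Ppow_def)
  define f where "f = s (vec_single k d)"
  define B where "B = {b. f b \<noteq> (\<lambda>_ _. 0)}"
  have f_free: "f \<in> free_mod ?R I" and B: "finite B"
    using s_free d_M by (simp_all add: f_def B_def free_mod_def)
  have "d = p f k"
    using p_s d_M by (simp add: f_def vec_single_def)
  also have "\<dots> = (\<Sum>b\<in>B. \<Sum>q<n. f b k q * basis_image b q)"
    using map_expansion[OF B f_free] k by (simp add: B_def mat_vec_def)
  finally have "(\<Sum>b\<in>B. \<Sum>q<n. f b k q * basis_image b q) \<notin> Ppow v (l k + 1)"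
    using d by (simp add: Ppow_def)
  then obtain b where b: "b \<in> B" and low_row: "(\<Sum>q<n. f b k q * basis_image b q) \<notin> Ppow v (l k + 1)"
    by (rule sum_notin_Ppow_obtains_term[OF B])
  obtain q where "q \<in> {..<n}" and low_term: "f b k q * basis_image b q \<notin> Ppow v (l k + 1)"
    using low_row by (rule sum_notin_Ppow_obtains_term[OF finite_lessThan])
  then have q: "q < n" by simp
  have "b \<in> I"
    using b f_free by (auto simp: B_def free_mod_def)
  then have "basis_image b \<in> ?M"
    unfolding basis_image_def by (rule p_M[rule_format, OF free_single_in_free_mod[OF zero_in_smo _ one_R]])
  then have "f b k q \<noteq> 0" "basis_image b q \<noteq> 0" "l q \<le> v (basis_image b q)"
    using low_term q by (auto simp: Ppow_def col_lattice_def)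
  then have "v (f b k q) \<le> l k - l q"
    using low_term by (simp add: Ppow_def v_mult)
  have "l i = m i q + l q" if i: "i < n" for i
  proof -
    have "m i q + l k \<le> l i + v (f b k q)"
      using projective_section_entry_bound[OF diag s_free s_hom i k q d] \<open>f b k q \<noteq> 0\<close> unfolding f_def .
    moreover have "l i \<le> m i q + l q"
      by (rule stable_col_lattice_exponent_le[OF stable i q])
    ultimately show ?thesis
      using \<open>v (f b k q) \<le> l k - l q\<close> by linarith
  qed
  then show ?thesis
    using q by blast
qed

end

theorem theorem3p1:
  fixes v :: "'d::division_ring \<Rightarrow> int" and n :: nat
    and m :: "nat \<Rightarrow> nat \<Rightarrow> int" and l :: "nat \<Rightarrow> int"
  assumes "nonarch_local_central_divalg v"
    and "1 \<le> n"
    and "\<forall>i<n. m i i = 0"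
    and "\<forall>i<n. \<forall>j<n. \<forall>k<n. m i k \<le> m i j + m j k"
    and "\<forall>i<n. m 0 i = 0"
    and "\<forall>A\<in>smo v n m. \<forall>x\<in>col_lattice v n l. mat_vec n A x \<in> col_lattice v n l"
  shows "is_projective n (smo v n m) (col_lattice v n l) \<longleftrightarrow>
         (\<exists>j<n. \<exists>c::int. \<forall>i<n. l i = m i j + c)"
proof -
  interpret discrete_valuation v
    using assms(1) by (rule nonarch_local_central_divalg_imp_discrete_valuation)
  have diag: "\<forall>i<n. m i i \<le> 0"
    using assms(3) by simp
  show ?thesis
  proof
    assume "is_projective n (smo v n m) (col_lattice v n l)"
    moreover have "0 < n"
      using assms(2) by simp
    ultimately show "\<exists>j<n. \<exists>c. \<forall>i<n. l i = m i j + c"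
      using shifted_column_if_col_lattice_projective[OF diag assms(6)] by blast
  next
    assume "\<exists>j<n. \<exists>c. \<forall>i<n. l i = m i j + c"
    then show "is_projective n (smo v n m) (col_lattice v n l)"
      using col_lattice_projective_if_shifted_column by blast
  qed
qed

end
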